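(* Let $L=(G,l)$ be a linkage whose underlying graph $G$ is series parallel. Then $L$ is realisable if and only if for every subgraph $H$ of $G$ that is a polygonal graph, the linkage $(H,l|_H)$ is realisable.
   Context: A graph has a finite vertex set and a finite multiset of edges, each an unordered pair of distinct vertices (parallel edges allowed, no loops). A polygonal graph is a graph isomorphic to the graph with vertex set $\{1,\dots,n\}$ ($n\ge2$) and edge multiset $\{\{i,i+1\}:1\le i\le n-1\}\cup\{\{n,1\}\}$ (for $n=2$ this is two parallel edges). A linkage is $L=(G,l)$ with $l:E\to\mathbb R_{\ge0}$; it is realisable if there exists $p:V\to\mathbb R^2$ with $|p(u)-p(v)|=l(\{u,v\})$ for every edge $\{u,v\}$. A TTG is $(G,s,t)$ with $s\ne t$; series composition $(G_1,s_1,t_1)\circ(G_2,s_2,t_2)=(G_1\cup_{t_2\sim s_1}G_2,s_2,t_1)$; parallel composition $(G_1,s_1,t_1)\|(G_2,s_2,t_2)=(G_1\cup_{s_1\sim s_2,t_1\sim t_2}G_2,s_1,t_1)$. TTSPGs are the smallest class of TTGs containing a single edge $(K_2,s,t)$ and closed under both compositions; $G$ is series parallel if $(G,s,t)$ is a TTSPG for some $s,t$. *)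

theory Defs
  imports "HOL-Analysis.Analysis"
begin

text \<open>Parallel edges = distinct labels with the same ends; no loops.\<close>

definition graph :: "'v set \<Rightarrow> 'e set \<Rightarrow> ('e \<Rightarrow> 'v set) \<Rightarrow> bool" where
  "graph V E ends \<longleftrightarrow> finite V \<and> finite E \<and>
     (\<forall>e\<in>E. ends e \<subseteq> V \<and> card (ends e) = 2)"

definition subgraph :: "'v set \<Rightarrow> 'e set \<Rightarrow> 'v set \<Rightarrow> 'e set \<Rightarrow> ('e \<Rightarrow> 'v set) \<Rightarrow> bool" where
  "subgraph V' E' V E ends \<longleftrightarrow> V' \<subseteq> V \<and> E' \<subseteq> E \<and> (\<forall>e\<in>E'. ends e \<subseteq> V')"

definition polygonal :: "'v set \<Rightarrow> 'e set \<Rightarrow> ('e \<Rightarrow> 'v set) \<Rightarrow> bool" where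
  "polygonal V E ends \<longleftrightarrow> (\<exists>n::nat. n \<ge> 2 \<and>
     (\<exists>f g. bij_betw f {0..<n} V \<and> bij_betw g {0..<n} E \<and>
        (\<forall>i<n. ends (g i) = {f i, f ((i + 1) mod n)})))"

definition realisable :: "'v set \<Rightarrow> 'e set \<Rightarrow> ('e \<Rightarrow> 'v set) \<Rightarrow> ('e \<Rightarrow> real) \<Rightarrow> bool" where
  "realisable V E ends l \<longleftrightarrow> (\<exists>p :: 'v \<Rightarrow> real^2.
     \<forall>e\<in>E. \<forall>u v. ends e = {u, v} \<longrightarrow> dist (p u) (p v) = l e)"

inductive ttspg :: "('e \<Rightarrow> 'v set) \<Rightarrow> 'v set \<Rightarrow> 'e set \<Rightarrow> 'v \<Rightarrow> 'v \<Rightarrow> bool"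
  for ends :: "'e \<Rightarrow> 'v set" where
  edge: "s \<noteq> t \<Longrightarrow> ends e = {s, t} \<Longrightarrow> ttspg ends {s, t} {e} s t"
| series: "ttspg ends V1 E1 s1 t1 \<Longrightarrow> ttspg ends V2 E2 s2 t2 \<Longrightarrow> t2 = s1 \<Longrightarrow>
           V1 \<inter> V2 = {s1} \<Longrightarrow> E1 \<inter> E2 = {} \<Longrightarrow>
           ttspg ends (V1 \<union> V2) (E1 \<union> E2) s2 t1"
| parallel: "ttspg ends V1 E1 s1 t1 \<Longrightarrow> ttspg ends V2 E2 s2 t2 \<Longrightarrow> s1 = s2 \<Longrightarrow> t1 = t2 \<Longrightarrow>
           V1 \<inter> V2 = {s1, t1} \<Longrightarrow> E1 \<inter> E2 = {} \<Longrightarrow>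
           ttspg ends (V1 \<union> V2) (E1 \<union> E2) s1 t1"

definition series_parallel :: "'v set \<Rightarrow> 'e set \<Rightarrow> ('e \<Rightarrow> 'v set) \<Rightarrow> bool" where
  "series_parallel V E ends \<longleftrightarrow> (\<exists>s t. ttspg ends V E s t)"

end

theory Submission
  imports Defs
begin

text \<open>
  The idea is to follow the series parallel decomposition and to control, for every
  two-terminal piece (G, s, t), the set of distances |p s - p t| over all realisations p.
  We show by induction on the decomposition that this set contains an interval [m, M]
  where M is the length of some s-t path and m is either 0 or the excess
  l e - l(Q - {e}) of an edge e on some s-t path Q (predicate terminal_range).
  A single edge gives [l e, l e]; series composition gives
  [max 0 (m1 - M2) (m2 - M1), M1 + M2], using a triangle with sides d1, d2, d;
  parallel composition gives [max m1 m2, min M1 M2], which is non-empty because the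
  excess witness of one side and the path of the other side form a polygon, and in a
  realised polygon no edge is longer than all other edges together.
  Realisations of the two pieces are glued after moving one of them by a plane isometry.
\<close>

lemma dist_real2: "dist (x::real^2) y = sqrt ((x$1 - y$1)^2 + (x$2 - y$2)^2)"
  by (simp add: dist_vec_def L2_set_def UNIV_2 dist_real_def)

lemma triangle_exists:
  fixes d d1 d2 :: real
  assumes "0 \<le> d1" "0 \<le> d2" "\<bar>d1 - d2\<bar> \<le> d" "d \<le> d1 + d2"
  shows "\<exists>A B C :: real^2. dist A B = d2 \<and> dist B C = d1 \<and> dist A C = d"
proof (cases "d2 = 0")
  case True
  then have "d = d1" using assms by auto
  show ?thesis
    by (rule exI[of _ 0], rule exI[of _ 0], rule exI[of _ "vector [d1, 0]"])
       (simp add: dist_real2 True \<open>d = d1\<close> assms)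
next
  case False
  then have d2: "d2 > 0" using assms by auto
  define x where "x = (d1^2 + d2^2 - d^2) / (2 * d2)"
  define y where "y = sqrt (d1^2 - x^2)"
  have "(d1 - d2)^2 \<le> d^2" "d^2 \<le> (d1 + d2)^2"
    using power_mono[of "\<bar>d1 - d2\<bar>" d 2] power_mono[of d "d1 + d2" 2] assms by auto
  then have "\<bar>d1^2 + d2^2 - d^2\<bar> \<le> 2 * d1 * d2"
    by (simp add: power2_eq_square algebra_simps abs_le_iff)
  then have "\<bar>x\<bar> \<le> d1" using d2 by (simp add: x_def abs_divide divide_le_eq)
  then have yy: "y^2 = d1^2 - x^2"
    using power_mono[of "\<bar>x\<bar>" d1 2] by (simp add: y_def)
  have "2 * d2 * x = d1^2 + d2^2 - d^2" using d2 by (simp add: x_def)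
  then have "(d2 - x)^2 + y^2 = d^2" using yy by (simp add: power2_eq_square algebra_simps)
  moreover have "x^2 + y^2 = d1^2" using yy by simp
  moreover have "0 \<le> d" using assms by linarith
  ultimately show ?thesis using assms
    by (intro exI[of _ "vector [d2, 0]"] exI[of _ 0] exI[of _ "vector [x, y]"]) (simp add: dist_real2)
qed

lemma isometry_exists:
  fixes a b c d :: "real^2"
  assumes "dist a b = dist c d"
  shows "\<exists>T. (\<forall>x y. dist (T x) (T y) = dist x y) \<and> T a = c \<and> T b = d"
proof -
  have "norm (b - a) = norm (d - c)" using assms by (simp add: dist_norm norm_minus_commute)
  then obtain f where f: "orthogonal_transformation f" "f (b - a) = d - c"
    by (rule orthogonal_transformation_exists)
  have lin: "linear f" using f(1) by (simp add: orthogonal_transformation_linear)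
  define T where "T x = c + f (x - a)" for x
  have "dist (T x) (T y) = dist x y" for x y
  proof -
    have "T x - T y = f (x - y)" unfolding T_def using lin
      by (simp add: linear_diff[symmetric] algebra_simps)
    then show ?thesis using f(1) by (simp add: dist_norm orthogonal_transformation_norm)
  qed
  moreover have "T a = c" "T b = d" using lin f by (simp_all add: T_def linear_0)
  ultimately show ?thesis by blast
qed

lemma third_vertex_exists:
  fixes B C :: "real^2"
  assumes "dist B C = d1" "0 \<le> d2" "\<bar>d1 - d2\<bar> \<le> d" "d \<le> d1 + d2"
  shows "\<exists>A. dist A B = d2 \<and> dist A C = d"
proof -
  obtain A' B' C' :: "real^2" where ABC: "dist A' B' = d2" "dist B' C' = d1" "dist A' C' = d"
    using triangle_exists[of d1 d2 d] assms zero_le_dist by metis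
  obtain T where "\<forall>x y. dist (T x) (T y) = dist x y" "T B' = B" "T C' = C"
    using isometry_exists[of B' C' B C] ABC assms(1) by metis
  then show ?thesis using ABC by (metis)
qed

definition placement :: "('e \<Rightarrow> 'v set) \<Rightarrow> 'e set \<Rightarrow> ('e \<Rightarrow> real) \<Rightarrow> ('v \<Rightarrow> real^2) \<Rightarrow> bool" where
  "placement ends E l p \<longleftrightarrow> (\<forall>e\<in>E. \<forall>u v. ends e = {u, v} \<longrightarrow> dist (p u) (p v) = l e)"

lemma realisable_iff_placement: "realisable V E ends l \<longleftrightarrow> (\<exists>p. placement ends E l p)"
  unfolding realisable_def placement_def ..

lemma placement_mono: "placement ends E l p \<Longrightarrow> E' \<subseteq> E \<Longrightarrow> placement ends E' l p"
  unfolding placement_def by blast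

lemma placement_isometry:
  "placement ends E l p \<Longrightarrow> (\<forall>x y. dist (T x) (T y) = dist x y) \<Longrightarrow> placement ends E l (T \<circ> p)"
  unfolding placement_def by simp

lemma placement_union:
  "placement ends E1 l p \<Longrightarrow> placement ends E2 l p \<Longrightarrow> placement ends (E1 \<union> E2) l p"
  unfolding placement_def by blast

lemma placement_cong:
  assumes "placement ends E l p" "\<forall>e\<in>E. ends e \<subseteq> V" "\<forall>x\<in>V. q x = p x"
  shows "placement ends E l q"
  unfolding placement_def
proof (intro ballI allI impI)
  fix e u v assume e: "e \<in> E" "ends e = {u, v}"
  then have "q u = p u" "q v = p v" using assms(2,3) by auto
  then show "dist (q u) (q v) = l e" using assms(1) e unfolding placement_def by simp
qed

definition distance_realisable ::
  "('e \<Rightarrow> 'v set) \<Rightarrow> 'e set \<Rightarrow> ('e \<Rightarrow> real) \<Rightarrow> 'v \<Rightarrow> 'v \<Rightarrow> real \<Rightarrow> bool" where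
  "distance_realisable ends E l s t d \<longleftrightarrow> (\<exists>p. placement ends E l p \<and> dist (p s) (p t) = d)"

lemma distance_realisable_series:
  assumes R1: "distance_realisable ends E1 l s1 t1 d1" and R2: "distance_realisable ends E2 l s2 s1 d2"
    and E1: "\<forall>e\<in>E1. ends e \<subseteq> V1" and E2: "\<forall>e\<in>E2. ends e \<subseteq> V2"
    and V: "V1 \<inter> V2 = {s1}" and "t1 \<in> V1" "s2 \<notin> V1"
    and d: "0 \<le> d2" "\<bar>d1 - d2\<bar> \<le> d" "d \<le> d1 + d2"
  shows "distance_realisable ends (E1 \<union> E2) l s2 t1 d"
proof -
  obtain p1 where p1: "placement ends E1 l p1" "dist (p1 s1) (p1 t1) = d1"
    using R1 unfolding distance_realisable_def by blast
  obtain p2 where p2: "placement ends E2 l p2" "dist (p2 s2) (p2 s1) = d2"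
    using R2 unfolding distance_realisable_def by blast
  obtain A where A: "dist A (p1 s1) = d2" "dist A (p1 t1) = d"
    using third_vertex_exists[OF p1(2) d] by blast
  have "dist (p2 s2) (p2 s1) = dist A (p1 s1)" using p2(2) A(1) by simp
  then obtain T where T: "\<forall>x y. dist (T x) (T y) = dist x y" "T (p2 s2) = A" "T (p2 s1) = p1 s1"
    using isometry_exists by blast
  define q where "q x = (if x \<in> V1 then p1 x else T (p2 x))" for x
  have "placement ends E1 l q" using placement_cong[OF p1(1) E1] by (simp add: q_def)
  moreover have "q x = (T \<circ> p2) x" if "x \<in> V2" for x
  proof (cases "x \<in> V1")
    case True
    then have "x = s1" using that V by blast
    then show ?thesis using T(3) by (simp add: q_def)
  qed (simp add: q_def)
  then have "placement ends E2 l q"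
    using placement_cong[OF placement_isometry[OF p2(1) T(1)] E2] by blast
  moreover have "dist (q s2) (q t1) = d" using A T assms(6,7) by (simp add: q_def)
  ultimately show ?thesis unfolding distance_realisable_def using placement_union by blast
qed

lemma distance_realisable_parallel:
  assumes R1: "distance_realisable ends E1 l s t d" and R2: "distance_realisable ends E2 l s t d"
    and E1: "\<forall>e\<in>E1. ends e \<subseteq> V1" and E2: "\<forall>e\<in>E2. ends e \<subseteq> V2"
    and V: "V1 \<inter> V2 = {s, t}"
  shows "distance_realisable ends (E1 \<union> E2) l s t d"
proof -
  obtain p1 where p1: "placement ends E1 l p1" "dist (p1 s) (p1 t) = d"
    using R1 unfolding distance_realisable_def by blast
  obtain p2 where p2: "placement ends E2 l p2" "dist (p2 s) (p2 t) = d"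
    using R2 unfolding distance_realisable_def by blast
  obtain T where T: "\<forall>x y. dist (T x) (T y) = dist x y" "T (p2 s) = p1 s" "T (p2 t) = p1 t"
    using isometry_exists[of "p2 s" "p2 t" "p1 s" "p1 t"] p1(2) p2(2) by blast
  define q where "q x = (if x \<in> V1 then p1 x else T (p2 x))" for x
  have "placement ends E1 l q" using placement_cong[OF p1(1) E1] by (simp add: q_def)
  moreover have "q x = (T \<circ> p2) x" if "x \<in> V2" for x
  proof (cases "x \<in> V1")
    case True
    then have "x = s \<or> x = t" using that V by blast
    then show ?thesis using T(2,3) by (auto simp: q_def)
  qed (simp add: q_def)
  then have "placement ends E2 l q"
    using placement_cong[OF placement_isometry[OF p2(1) T(1)] E2] by blast
  moreover have "dist (q s) (q t) = d" using p1(2) V by (auto simp: q_def)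
  ultimately show ?thesis unfolding distance_realisable_def using placement_union by blast
qed

fun walk :: "('e \<Rightarrow> 'v set) \<Rightarrow> 'v list \<Rightarrow> 'e list \<Rightarrow> bool" where
  "walk ends [v] [] \<longleftrightarrow> True"
| "walk ends (u # v # vs) (e # es) \<longleftrightarrow> ends e = {u, v} \<and> walk ends (v # vs) es"
| "walk ends _ _ \<longleftrightarrow> False"

lemma walk_length: "walk ends vs es \<Longrightarrow> length vs = Suc (length es)"
  by (induction ends vs es rule: walk.induct) auto

lemma walk_nth:
  "walk ends vs es \<Longrightarrow> i < length es \<Longrightarrow> ends (es ! i) = {vs ! i, vs ! Suc i}"
proof (induction ends vs es arbitrary: i rule: walk.induct)
  case (2 ends u v vs e es)
  then show ?case by (cases i) auto
qed auto

lemma walk_edge_ends: "walk ends vs es \<Longrightarrow> e \<in> set es \<Longrightarrow> ends e \<subseteq> set vs"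
  by (induction ends vs es rule: walk.induct) auto

lemma walk_trivial: "walk ends vs [] \<Longrightarrow> hd vs = last vs"
  using walk_length[of ends vs "[]"] by (cases vs) auto

lemma walk_append:
  "walk ends vs1 es1 \<Longrightarrow> walk ends vs2 es2 \<Longrightarrow> last vs1 = hd vs2 \<Longrightarrow>
   walk ends (butlast vs1 @ vs2) (es1 @ es2)"
proof (induction ends vs1 es1 rule: walk.induct)
  case (2 ends u v vs e es)
  obtain ws where ws: "butlast (v # vs) @ vs2 = v # ws"
    using "2.prems" walk_length[OF "2.prems"(2)] by (cases vs; cases vs2) auto
  have "walk ends (v # ws) (es @ es2)" using "2.IH" "2.prems" unfolding ws by simp
  then have "walk ends (u # (butlast (v # vs) @ vs2)) (e # es @ es2)"
    using "2.prems"(1) unfolding ws by simp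
  then show ?case by simp
qed auto

lemma walk_rev: "walk ends vs es \<Longrightarrow> walk ends (rev vs) (rev es)"
proof (induction ends vs es rule: walk.induct)
  case (2 ends u v vs e es)
  have "walk ends [v, u] [e]" using "2.prems" by (simp add: insert_commute)
  from walk_append[OF "2.IH" this] "2.prems" show ?case by simp
qed auto

definition st_path :: "('e \<Rightarrow> 'v set) \<Rightarrow> 'v set \<Rightarrow> 'e set \<Rightarrow> 'v \<Rightarrow> 'v \<Rightarrow> 'e set \<Rightarrow> bool" where
  "st_path ends V E s t P \<longleftrightarrow> (\<exists>vs es. walk ends vs es \<and> distinct vs \<and> distinct es \<and>
     hd vs = s \<and> last vs = t \<and> set vs \<subseteq> V \<and> set es \<subseteq> E \<and> set es = P)"

lemma st_path_edges: "st_path ends V E s t P \<Longrightarrow> finite P \<and> P \<subseteq> E"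
  unfolding st_path_def by auto

lemma st_path_terminals:
  assumes "st_path ends V E s t P"
  shows "s \<in> V \<and> t \<in> V"
proof -
  obtain vs es where "walk ends vs es" "hd vs = s" "last vs = t" "set vs \<subseteq> V"
    using assms unfolding st_path_def by blast
  moreover from this have "vs \<noteq> []" using walk_length by fastforce
  ultimately show ?thesis by auto
qed

lemma st_path_mono:
  "st_path ends V E s t P \<Longrightarrow> V \<subseteq> V' \<Longrightarrow> E \<subseteq> E' \<Longrightarrow> st_path ends V' E' s t P"
  unfolding st_path_def by blast

lemma st_path_edge: "ends e = {s, t} \<Longrightarrow> s \<noteq> t \<Longrightarrow> st_path ends {s, t} {e} s t {e}"
  unfolding st_path_def by (rule exI[of _ "[s, t]"], rule exI[of _ "[e]"]) auto

lemma distinct_last_notin_butlast: "distinct xs \<Longrightarrow> last xs \<notin> set (butlast xs)"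
  by (cases xs rule: rev_cases) auto

lemma st_path_concat:
  assumes P1: "st_path ends V1 E1 a b P1" and P2: "st_path ends V2 E2 b c P2"
    and V: "V1 \<inter> V2 = {b}" and E: "E1 \<inter> E2 = {}"
  shows "st_path ends (V1 \<union> V2) (E1 \<union> E2) a c (P1 \<union> P2)"
proof -
  obtain vs1 es1 where w1: "walk ends vs1 es1" "distinct vs1" "distinct es1" "hd vs1 = a"
      "last vs1 = b" "set vs1 \<subseteq> V1" "set es1 \<subseteq> E1" "set es1 = P1"
    using P1 unfolding st_path_def by blast
  obtain vs2 es2 where w2: "walk ends vs2 es2" "distinct vs2" "distinct es2" "hd vs2 = b"
      "last vs2 = c" "set vs2 \<subseteq> V2" "set es2 \<subseteq> E2" "set es2 = P2"
    using P2 unfolding st_path_def by blast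
  have ne: "vs1 \<noteq> []" "vs2 \<noteq> []"
    using walk_length[OF w1(1)] walk_length[OF w2(1)] by auto
  have "set (butlast vs1) \<inter> set vs2 = {}"
  proof (intro equals0I)
    fix x assume "x \<in> set (butlast vs1) \<inter> set vs2"
    then have "x \<in> set (butlast vs1)" "x \<in> V1 \<inter> V2"
      using w1(6) w2(6) in_set_butlastD[of x vs1] by auto
    then show False using V w1(5) distinct_last_notin_butlast[OF w1(2)] by auto
  qed
  then have "distinct (butlast vs1 @ vs2)" using w1(2) w2(2) by (simp add: distinct_butlast)
  moreover have "hd (butlast vs1 @ vs2) = a"
    using ne w1(4,5) w2(4) by (cases vs1 rule: rev_cases) (auto simp: hd_append)
  moreover have "set (butlast vs1 @ vs2) \<subseteq> V1 \<union> V2"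
    using w1(6) w2(6) by (auto dest: in_set_butlastD)
  moreover have "distinct (es1 @ es2)" using w1 w2 E by auto
  ultimately show ?thesis unfolding st_path_def using walk_append[OF w1(1) w2(1)] w1 w2 ne
    by (intro exI[of _ "butlast vs1 @ vs2"] exI[of _ "es1 @ es2"]) auto
qed

lemma closed_walk_polygonal:
  assumes w: "walk ends vs es" and closed: "hd vs = last vs"
    and dv: "distinct (butlast vs)" and de: "distinct es" and two: "2 \<le> length es"
  shows "polygonal (set vs) (set es) ends"
proof -
  define n where "n = length es"
  have len: "length vs = Suc n" using walk_length[OF w] by (simp add: n_def)
  have nth_bl: "butlast vs ! i = vs ! i" if "i < n" for i
    using that len by (simp add: nth_butlast)
  have "last vs \<in> set (butlast vs)"
  proof -
    have "vs \<noteq> []" "0 < n" using len two by (auto simp: n_def)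
    then have "last vs = butlast vs ! 0" using closed nth_bl[of 0] by (metis hd_conv_nth)
    moreover have "0 < length (butlast vs)" using len \<open>0 < n\<close> by simp
    ultimately show ?thesis by (simp add: nth_mem)
  qed
  then have "set vs = set (butlast vs)"
    using append_butlast_last_id[of vs] len by (metis Un_insert_right append_Nil2 insert_absorb
        list.set(2) list.size(3) nat.distinct(1) set_append)
  then have "bij_betw ((!) (butlast vs)) {0..<n} (set vs)"
    using len dv by (intro bij_betw_nth) auto
  then have f: "bij_betw ((!) vs) {0..<n} (set vs)"
    using bij_betw_cong[of "{0..<n}" "(!) (butlast vs)" "(!) vs"] nth_bl by simp
  have g: "bij_betw ((!) es) {0..<n} (set es)"
    using de by (intro bij_betw_nth) (auto simp: n_def)
  have "ends (es ! i) = {vs ! i, vs ! ((i + 1) mod n)}" if "i < n" for i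
  proof (cases "Suc i < n")
    case True then show ?thesis using walk_nth[OF w] that by (simp add: n_def)
  next
    case False
    then have last: "Suc i = n" using that by simp
    then have "(i + 1) mod n = 0" by simp
    moreover have "vs ! n = vs ! 0"
      using closed len by (metis diff_Suc_1 hd_conv_nth last_conv_nth list.size(3) nat.distinct(1))
    moreover have "ends (es ! i) = {vs ! i, vs ! Suc i}" using walk_nth[OF w] that by (simp add: n_def)
    ultimately show ?thesis using last by simp
  qed
  then show ?thesis unfolding polygonal_def using two f g n_def by blast
qed

lemma two_paths_polygon:
  assumes P: "st_path ends V1 E1 s t P" and Q: "st_path ends V2 E2 s t Q"
    and V: "V1 \<inter> V2 = {s, t}" and E: "E1 \<inter> E2 = {}" and st: "s \<noteq> t"
  shows "\<exists>V'. subgraph V' (P \<union> Q) (V1 \<union> V2) (E1 \<union> E2) ends \<and> polygonal V' (P \<union> Q) ends"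
proof -
  obtain vs1 es1 where w1: "walk ends vs1 es1" "distinct vs1" "distinct es1" "hd vs1 = s"
      "last vs1 = t" "set vs1 \<subseteq> V1" "set es1 \<subseteq> E1" "set es1 = P"
    using P unfolding st_path_def by blast
  obtain vs2 es2 where w2: "walk ends vs2 es2" "distinct vs2" "distinct es2" "hd vs2 = s"
      "last vs2 = t" "set vs2 \<subseteq> V2" "set es2 \<subseteq> E2" "set es2 = Q"
    using Q unfolding st_path_def by blast
  define vs where "vs = butlast vs1 @ rev vs2"
  define es where "es = es1 @ rev es2"
  have ne: "es1 \<noteq> []" "es2 \<noteq> []"
    using walk_trivial[of ends vs1] walk_trivial[of ends vs2] w1 w2 st by auto
  have ne': "butlast vs1 \<noteq> []" "vs2 \<noteq> []"
    using walk_length[OF w1(1)] walk_length[OF w2(1)] ne(1) by (cases vs1 rule: rev_cases; auto)+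
  have w: "walk ends vs es"
    unfolding vs_def es_def using w1 w2 by (intro walk_append walk_rev) (auto simp: hd_rev)
  have closed: "hd vs = last vs"
    using w1(4) w2(4) ne' by (cases vs1) (auto simp: vs_def last_rev)
  have "set (butlast vs1) \<inter> set (tl vs2) = {}"
  proof -
    have "s \<notin> set (tl vs2)" using w2(2,4) ne' by (cases vs2) auto
    moreover have "t \<notin> set (butlast vs1)" using w1(2,5) distinct_last_notin_butlast by metis
    ultimately show ?thesis using w1(6) w2(6) V in_set_butlastD list.set_sel(2)[of vs2] by fastforce
  qed
  then have "distinct (butlast vs)"
    using w1(2) w2(2) ne' by (simp add: vs_def butlast_append butlast_rev distinct_butlast distinct_tl)
  moreover have "distinct es" using w1 w2 E by (auto simp: es_def)
  moreover have "2 \<le> length es" using ne by (simp add: es_def Suc_le_eq length_greater_0_conv[symmetric] del: length_greater_0_conv)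
  ultimately have "polygonal (set vs) (P \<union> Q) ends"
    using closed_walk_polygonal[OF w closed] w1(8) w2(8) by (simp add: es_def)
  moreover have "subgraph (set vs) (P \<union> Q) (V1 \<union> V2) (E1 \<union> E2) ends"
    unfolding subgraph_def using w1 w2 walk_edge_ends[OF w]
    by (auto simp: vs_def es_def dest: in_set_butlastD)
  ultimately show ?thesis by blast
qed

definition polygons_realisable :: "('e \<Rightarrow> 'v set) \<Rightarrow> 'v set \<Rightarrow> 'e set \<Rightarrow> ('e \<Rightarrow> real) \<Rightarrow> bool" where
  "polygons_realisable ends V E l \<longleftrightarrow>
     (\<forall>V' E'. subgraph V' E' V E ends \<and> polygonal V' E' ends \<longrightarrow> realisable V' E' ends l)"

lemma polygons_realisable_mono:
  assumes "polygons_realisable ends V E l" "V1 \<subseteq> V" "E1 \<subseteq> E"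
  shows "polygons_realisable ends V1 E1 l"
proof -
  have "subgraph V' E' V E ends" if "subgraph V' E' V1 E1 ends" for V' E'
    using that assms(2,3) unfolding subgraph_def by blast
  then show ?thesis using assms(1) unfolding polygons_realisable_def by blast
qed

lemma dist_chain:
  fixes x :: "nat \<Rightarrow> 'a::metric_space"
  shows "a \<le> b \<Longrightarrow> dist (x a) (x b) \<le> (\<Sum>i\<in>{a..<b}. dist (x i) (x (Suc i)))"
proof (induction b rule: dec_induct)
  case (step b)
  have "dist (x a) (x (Suc b)) \<le> dist (x a) (x b) + dist (x b) (x (Suc b))" by (rule dist_triangle)
  also have "\<dots> \<le> (\<Sum>i\<in>{a..<Suc b}. dist (x i) (x (Suc i)))" using step by simp
  finally show ?case .
qed simp

lemma polygon_inequality: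
  assumes "polygonal V E ends" "realisable V E ends l" "e \<in> E"
  shows "2 * l e \<le> sum l E"
proof -
  obtain n :: nat and f g where n: "bij_betw f {0..<n} V" "bij_betw g {0..<n} E"
    "\<forall>i<n. ends (g i) = {f i, f ((i + 1) mod n)}"
    using assms(1) unfolding polygonal_def by blast
  obtain p where p: "placement ends E l p"
    using assms(2) realisable_iff_placement by blast
  define x where "x i = p (f (i mod n))" for i
  define d where "d i = dist (x i) (x (Suc i))" for i
  have ld: "l (g i) = d i" if "i < n" for i
  proof -
    have "g i \<in> E" using n(2) that by (auto simp: bij_betw_def)
    then have "dist (p (f i)) (p (f ((i + 1) mod n))) = l (g i)"
      using p n(3) that unfolding placement_def by blast
    then show ?thesis using that by (simp add: d_def x_def)
  qed
  obtain j where j: "j < n" "e = g j" using n(2) assms(3) unfolding bij_betw_def by auto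
  have before: "dist (x 0) (x j) \<le> sum d {0..<j}"
    using dist_chain[of 0 j x] by (simp add: d_def)
  have after: "dist (x (Suc j)) (x n) \<le> sum d {Suc j..<n}"
    using dist_chain[of "Suc j" n x] j by (simp add: d_def)
  have "d j \<le> dist (x j) (x 0) + dist (x 0) (x (Suc j))" unfolding d_def by (rule dist_triangle)
  also have "\<dots> \<le> sum d {0..<j} + sum d {Suc j..<n}"
    using before after by (simp add: x_def dist_commute)
  finally have "2 * d j \<le> sum d {0..<Suc j} + sum d {Suc j..<n}" by simp
  also have "\<dots> = sum d {0..<n}" using j by (intro sum.atLeastLessThan_concat) auto
  also have "\<dots> = sum (l \<circ> g) {0..<n}" using ld by simp
  also have "\<dots> = sum l E" using n(2) unfolding bij_betw_def by (metis sum.reindex)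
  finally show ?thesis using ld[OF j(1)] j(2) by simp
qed

lemma excess_le_parallel_path:
  assumes P: "st_path ends V1 E1 s t P" and Q: "st_path ends V2 E2 s t Q" and e: "e \<in> Q"
    and V: "V1 \<inter> V2 = {s, t}" and E: "E1 \<inter> E2 = {}" and st: "s \<noteq> t"
    and H: "polygons_realisable ends (V1 \<union> V2) (E1 \<union> E2) l"
  shows "l e - sum l (Q - {e}) \<le> sum l P"
proof -
  obtain V' where "subgraph V' (P \<union> Q) (V1 \<union> V2) (E1 \<union> E2) ends"
    and pol: "polygonal V' (P \<union> Q) ends"
    using two_paths_polygon[OF P Q V E st] by blast
  then have "realisable V' (P \<union> Q) ends l" using H unfolding polygons_realisable_def by blast
  then have "2 * l e \<le> sum l (P \<union> Q)" using polygon_inequality[OF pol] e by blast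
  moreover have "sum l (P \<union> Q) = sum l P + sum l Q"
    using st_path_edges[OF P] st_path_edges[OF Q] E by (intro sum.union_disjoint) auto
  moreover have "sum l Q = l e + sum l (Q - {e})"
    using st_path_edges[OF Q] e by (simp add: sum.remove)
  ultimately show ?thesis by linarith
qed

definition excess_witness ::
  "('e \<Rightarrow> 'v set) \<Rightarrow> 'v set \<Rightarrow> 'e set \<Rightarrow> ('e \<Rightarrow> real) \<Rightarrow> 'v \<Rightarrow> 'v \<Rightarrow> real \<Rightarrow> bool" where
  "excess_witness ends V E l s t m \<longleftrightarrow>
     m = 0 \<or> (\<exists>Q e. st_path ends V E s t Q \<and> e \<in> Q \<and> m = l e - sum l (Q - {e}))"

definition terminal_range ::
  "('e \<Rightarrow> 'v set) \<Rightarrow> 'v set \<Rightarrow> 'e set \<Rightarrow> ('e \<Rightarrow> real) \<Rightarrow> 'v \<Rightarrow> 'v \<Rightarrow> real \<Rightarrow> real \<Rightarrow> bool" where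
  "terminal_range ends V E l s t m M \<longleftrightarrow> 0 \<le> m \<and> m \<le> M \<and>
     (\<forall>d. m \<le> d \<and> d \<le> M \<longrightarrow> distance_realisable ends E l s t d) \<and>
     (\<exists>P. st_path ends V E s t P \<and> sum l P = M) \<and> excess_witness ends V E l s t m"

lemma excess_witness_mono:
  "excess_witness ends V E l s t m \<Longrightarrow> V \<subseteq> V' \<Longrightarrow> E \<subseteq> E' \<Longrightarrow> excess_witness ends V' E' l s t m"
  unfolding excess_witness_def using st_path_mono by metis

lemma terminal_range_edge:
  assumes "ends e = {s, t}" "s \<noteq> t" "0 \<le> l e"
  shows "terminal_range ends {s, t} {e} l s t (l e) (l e)"
proof -
  define p where "p x = (if x = s then (0::real^2) else vector [l e, 0])" for x
  have d: "dist (p s) (p t) = l e" using assms by (simp add: p_def dist_real2)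
  have "placement ends {e} l p"
    unfolding placement_def
  proof (intro ballI allI impI)
    fix e' u v assume "e' \<in> {e}" "ends e' = {u, v}"
    then have "e' = e" "(u = s \<and> v = t) \<or> (u = t \<and> v = s)" using assms(1) by (auto simp: doubleton_eq_iff)
    then show "dist (p u) (p v) = l e'" using d by (auto simp: dist_commute)
  qed
  then show ?thesis
    unfolding terminal_range_def excess_witness_def distance_realisable_def
    using st_path_edge[of ends e s t] assms(1,2) d assms(3) by fastforce
qed

lemma series_lengths:
  fixes m1 M1 m2 M2 d :: real
  assumes "0 \<le> m1" "m1 \<le> M1" "0 \<le> m2" "m2 \<le> M2"
    and "max 0 (max (m1 - M2) (m2 - M1)) \<le> d" "d \<le> M1 + M2"
  shows "\<exists>d1 d2. m1 \<le> d1 \<and> d1 \<le> M1 \<and> m2 \<le> d2 \<and> d2 \<le> M2 \<and> \<bar>d1 - d2\<bar> \<le> d \<and> d \<le> d1 + d2"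
proof -
  define d1 where "d1 = (if M1 - M2 > d then max m1 (M2 + d) else M1)"
  define d2 where "d2 = (if M2 - M1 > d then max m2 (M1 + d) else M2)"
  have "m1 \<le> d1" "d1 \<le> M1" "m2 \<le> d2" "d2 \<le> M2" "\<bar>d1 - d2\<bar> \<le> d" "d \<le> d1 + d2"
    using assms unfolding d1_def d2_def by (auto split: if_splits)
  then show ?thesis by blast
qed

lemma sum_union_remove:
  assumes "finite A" "finite B" "A \<inter> B = {}" "e \<in> A"
  shows "sum l ((A \<union> B) - {e}) = sum l (A - {e}) + sum l B"
proof -
  have "(A \<union> B) - {e} = (A - {e}) \<union> B" using assms(3,4) by blast
  then show ?thesis using assms(1-3) by (simp add: sum.union_disjoint Int_Diff Diff_Int_distrib2)
qed

text \<open>Extending an excess witness by a path of the other piece lowers the excess by its length.\<close>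

lemma excess_witness_series:
  assumes X1: "excess_witness ends V1 E1 l s1 t1 m1" and X2: "excess_witness ends V2 E2 l s2 s1 m2"
    and P1: "st_path ends V1 E1 s1 t1 P1" and P2: "st_path ends V2 E2 s2 s1 P2"
    and V: "V1 \<inter> V2 = {s1}" and E: "E1 \<inter> E2 = {}"
    and nonneg: "0 \<le> sum l P1" "0 \<le> sum l P2"
  shows "excess_witness ends (V1 \<union> V2) (E1 \<union> E2) l s2 t1
           (max 0 (max (m1 - sum l P2) (m2 - sum l P1)))" (is "excess_witness _ _ _ _ _ _ ?m")
proof -
  have P1E: "finite P1" "P1 \<subseteq> E1" and P2E: "finite P2" "P2 \<subseteq> E2"
    using st_path_edges[OF P1] st_path_edges[OF P2] by auto
  have V': "V2 \<inter> V1 = {s1}" using V by blast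
  consider "?m = 0" | "?m = m1 - sum l P2" "m1 \<noteq> 0" | "?m = m2 - sum l P1" "m2 \<noteq> 0"
    using nonneg by (smt (verit))
  then show ?thesis
  proof cases
    case 2
    then obtain Q e where Q: "st_path ends V1 E1 s1 t1 Q" "e \<in> Q" "m1 = l e - sum l (Q - {e})"
      using X1 unfolding excess_witness_def by blast
    have QE: "finite Q" "Q \<subseteq> E1" using st_path_edges[OF Q(1)] by auto
    have "st_path ends (V2 \<union> V1) (E2 \<union> E1) s2 t1 (P2 \<union> Q)"
      using st_path_concat[OF P2 Q(1) V'] E by blast
    then have "st_path ends (V1 \<union> V2) (E1 \<union> E2) s2 t1 (Q \<union> P2)"
      by (simp add: Un_commute)
    moreover have "sum l ((Q \<union> P2) - {e}) = sum l (Q - {e}) + sum l P2"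
      using QE P2E E Q(2) by (intro sum_union_remove) auto
    then have "?m = l e - sum l ((Q \<union> P2) - {e})" using 2 Q(3) by linarith
    ultimately show ?thesis unfolding excess_witness_def using Q(2) by blast
  next
    case 3
    then obtain Q e where Q: "st_path ends V2 E2 s2 s1 Q" "e \<in> Q" "m2 = l e - sum l (Q - {e})"
      using X2 unfolding excess_witness_def by blast
    have QE: "finite Q" "Q \<subseteq> E2" using st_path_edges[OF Q(1)] by auto
    have "st_path ends (V2 \<union> V1) (E2 \<union> E1) s2 t1 (Q \<union> P1)"
      using st_path_concat[OF Q(1) P1 V'] E by blast
    then have "st_path ends (V1 \<union> V2) (E1 \<union> E2) s2 t1 (Q \<union> P1)"
      by (simp add: Un_commute)
    moreover have "sum l ((Q \<union> P1) - {e}) = sum l (Q - {e}) + sum l P1"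
      using QE P1E E Q(2) by (intro sum_union_remove) auto
    then have "?m = l e - sum l ((Q \<union> P1) - {e})" using 3 Q(3) by linarith
    ultimately show ?thesis unfolding excess_witness_def using Q(2) by blast
  qed (simp add: excess_witness_def)
qed

lemma terminal_range_series:
  assumes R1: "terminal_range ends V1 E1 l s1 t1 m1 M1" and R2: "terminal_range ends V2 E2 l s2 s1 m2 M2"
    and E1: "\<forall>e\<in>E1. ends e \<subseteq> V1" and E2: "\<forall>e\<in>E2. ends e \<subseteq> V2"
    and V: "V1 \<inter> V2 = {s1}" and E: "E1 \<inter> E2 = {}" and s: "s2 \<noteq> s1"
  shows "terminal_range ends (V1 \<union> V2) (E1 \<union> E2) l s2 t1
           (max 0 (max (m1 - M2) (m2 - M1))) (M1 + M2)"
proof -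
  obtain P1 where P1: "st_path ends V1 E1 s1 t1 P1" "sum l P1 = M1"
    and m1: "0 \<le> m1" "m1 \<le> M1" and X1: "excess_witness ends V1 E1 l s1 t1 m1"
    and D1: "\<And>d. m1 \<le> d \<Longrightarrow> d \<le> M1 \<Longrightarrow> distance_realisable ends E1 l s1 t1 d"
    using R1 unfolding terminal_range_def by blast
  obtain P2 where P2: "st_path ends V2 E2 s2 s1 P2" "sum l P2 = M2"
    and m2: "0 \<le> m2" "m2 \<le> M2" and X2: "excess_witness ends V2 E2 l s2 s1 m2"
    and D2: "\<And>d. m2 \<le> d \<Longrightarrow> d \<le> M2 \<Longrightarrow> distance_realisable ends E2 l s2 s1 d"
    using R2 unfolding terminal_range_def by blast
  have "t1 \<in> V1" "s2 \<notin> V1" using st_path_terminals[OF P1(1)] st_path_terminals[OF P2(1)] V s by auto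
  have "distance_realisable ends (E1 \<union> E2) l s2 t1 d"
    if d: "max 0 (max (m1 - M2) (m2 - M1)) \<le> d" "d \<le> M1 + M2" for d
  proof -
    obtain d1 d2 where "m1 \<le> d1" "d1 \<le> M1" "m2 \<le> d2" "d2 \<le> M2" "\<bar>d1 - d2\<bar> \<le> d" "d \<le> d1 + d2"
      using series_lengths[OF m1 m2 d] by blast
    then show ?thesis using distance_realisable_series[OF D1 D2 E1 E2 V \<open>t1 \<in> V1\<close> \<open>s2 \<notin> V1\<close>] m2
      by simp
  qed
  moreover have "st_path ends (V1 \<union> V2) (E1 \<union> E2) s2 t1 (P2 \<union> P1)"
    using st_path_concat[OF P2(1) P1(1)] V E by (simp add: Un_commute Int_commute)
  moreover have "sum l (P2 \<union> P1) = M1 + M2"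
    using st_path_edges[OF P1(1)] st_path_edges[OF P2(1)] E P1(2) P2(2)
    by (subst sum.union_disjoint) auto
  moreover have "excess_witness ends (V1 \<union> V2) (E1 \<union> E2) l s2 t1 (max 0 (max (m1 - M2) (m2 - M1)))"
    using excess_witness_series[OF X1 X2 P1(1) P2(1) V E] P1(2) P2(2) m1 m2 by simp
  ultimately show ?thesis unfolding terminal_range_def using m1 m2 by auto
qed

text \<open>Parallel composition: the ranges intersect, by the polygon inequality.\<close>

lemma terminal_range_parallel:
  assumes R1: "terminal_range ends V1 E1 l s t m1 M1" and R2: "terminal_range ends V2 E2 l s t m2 M2"
    and E1: "\<forall>e\<in>E1. ends e \<subseteq> V1" and E2: "\<forall>e\<in>E2. ends e \<subseteq> V2"
    and V: "V1 \<inter> V2 = {s, t}" and E: "E1 \<inter> E2 = {}" and st: "s \<noteq> t"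
    and H: "polygons_realisable ends (V1 \<union> V2) (E1 \<union> E2) l"
  shows "terminal_range ends (V1 \<union> V2) (E1 \<union> E2) l s t (max m1 m2) (min M1 M2)"
proof -
  obtain P1 where P1: "st_path ends V1 E1 s t P1" "sum l P1 = M1"
    and m1: "0 \<le> m1" "m1 \<le> M1" and X1: "excess_witness ends V1 E1 l s t m1"
    and D1: "\<And>d. m1 \<le> d \<Longrightarrow> d \<le> M1 \<Longrightarrow> distance_realisable ends E1 l s t d"
    using R1 unfolding terminal_range_def by blast
  obtain P2 where P2: "st_path ends V2 E2 s t P2" "sum l P2 = M2"
    and m2: "0 \<le> m2" "m2 \<le> M2" and X2: "excess_witness ends V2 E2 l s t m2"
    and D2: "\<And>d. m2 \<le> d \<Longrightarrow> d \<le> M2 \<Longrightarrow> distance_realisable ends E2 l s t d"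
    using R2 unfolding terminal_range_def by blast
  have "m1 \<le> M2"
  proof (cases "m1 = 0")
    case False
    then obtain Q e where Q: "st_path ends V1 E1 s t Q" "e \<in> Q" "m1 = l e - sum l (Q - {e})"
      using X1 unfolding excess_witness_def by blast
    have V': "V2 \<inter> V1 = {s, t}" and E': "E2 \<inter> E1 = {}" using V E by auto
    have H': "polygons_realisable ends (V2 \<union> V1) (E2 \<union> E1) l" using H by (simp add: Un_commute)
    show ?thesis using excess_le_parallel_path[OF P2(1) Q(1,2) V' E' st H'] Q(3) P2(2) by simp
  qed (use m2 in simp)
  moreover have "m2 \<le> M1"
  proof (cases "m2 = 0")
    case False
    then obtain Q e where Q: "st_path ends V2 E2 s t Q" "e \<in> Q" "m2 = l e - sum l (Q - {e})"
      using X2 unfolding excess_witness_def by blast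
    then show ?thesis using excess_le_parallel_path[OF P1(1) Q(1,2) V E st H] P1(2) by simp
  qed (use m1 in simp)
  moreover have "distance_realisable ends (E1 \<union> E2) l s t d"
    if "max m1 m2 \<le> d" "d \<le> min M1 M2" for d
    using distance_realisable_parallel[OF D1 D2 E1 E2 V] that by simp
  moreover have "\<exists>P. st_path ends (V1 \<union> V2) (E1 \<union> E2) s t P \<and> sum l P = min M1 M2"
    using st_path_mono[OF P1(1), of "V1 \<union> V2" "E1 \<union> E2"] st_path_mono[OF P2(1), of "V1 \<union> V2" "E1 \<union> E2"]
      P1(2) P2(2) by (cases "M1 \<le> M2") (auto simp: min_def)
  moreover have "excess_witness ends (V1 \<union> V2) (E1 \<union> E2) l s t (max m1 m2)"
    using excess_witness_mono[OF X1, of "V1 \<union> V2" "E1 \<union> E2"] excess_witness_mono[OF X2, of "V1 \<union> V2" "E1 \<union> E2"]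
    by (cases "m1 \<le> m2") (auto simp: max_def)
  ultimately show ?thesis unfolding terminal_range_def using m1 m2 by auto
qed

lemma ttspg_wellformed:
  "ttspg ends V E s t \<Longrightarrow> s \<noteq> t \<and> s \<in> V \<and> t \<in> V \<and> (\<forall>e\<in>E. ends e \<subseteq> V)"
proof (induction rule: ttspg.induct)
  case (series V1 E1 s1 t1 V2 E2 s2 t2)
  have "s2 \<noteq> t1"
  proof
    assume "s2 = t1"
    then have "s2 \<in> V1 \<inter> V2" using series.IH by simp
    then show False using series.hyps(3,4) series.IH by simp
  qed
  then show ?case using series.IH by auto
qed auto

lemma terminal_range_exists:
  assumes "ttspg ends V E s t" "\<forall>e\<in>E. 0 \<le> l e" "polygons_realisable ends V E l"
  shows "\<exists>m M. terminal_range ends V E l s t m M"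
  using assms
proof (induction rule: ttspg.induct)
  case (edge s t e)
  then show ?case using terminal_range_edge by fastforce
next
  case (series V1 E1 s1 t1 V2 E2 s2 t2)
  obtain m1 M1 where "terminal_range ends V1 E1 l s1 t1 m1 M1"
    using series.IH(1) series.prems polygons_realisable_mono by blast
  moreover obtain m2 M2 where "terminal_range ends V2 E2 l s2 s1 m2 M2"
    using series.IH(2) series.prems polygons_realisable_mono series.hyps(3) by blast
  ultimately have "terminal_range ends (V1 \<union> V2) (E1 \<union> E2) l s2 t1
      (max 0 (max (m1 - M2) (m2 - M1))) (M1 + M2)"
    using ttspg_wellformed[OF series.hyps(1)] ttspg_wellformed[OF series.hyps(2)] series.hyps(3-5)
    by (intro terminal_range_series) auto
  then show ?case by blast
next
  case (parallel V1 E1 s1 t1 V2 E2 s2 t2)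
  obtain m1 M1 where "terminal_range ends V1 E1 l s1 t1 m1 M1"
    using parallel.IH(1) parallel.prems polygons_realisable_mono by blast
  moreover obtain m2 M2 where "terminal_range ends V2 E2 l s1 t1 m2 M2"
    using parallel.IH(2) parallel.prems polygons_realisable_mono parallel.hyps(3,4) by blast
  ultimately have "terminal_range ends (V1 \<union> V2) (E1 \<union> E2) l s1 t1 (max m1 m2) (min M1 M2)"
    using ttspg_wellformed[OF parallel.hyps(1)] ttspg_wellformed[OF parallel.hyps(2)] parallel.hyps(3-6)
      parallel.prems(2) by (intro terminal_range_parallel) auto
  then show ?case using parallel.hyps(3,4) by blast
qed

lemma realisable_iff_polygons_realisable:
  assumes st: "ttspg ends V E s t" and nonneg: "\<forall>e\<in>E. 0 \<le> l e"
  shows "realisable V E ends l \<longleftrightarrow> polygons_realisable ends V E l"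
proof
  assume "realisable V E ends l"
  then obtain p where p: "placement ends E l p" by (auto simp: realisable_iff_placement)
  show "polygons_realisable ends V E l"
    unfolding polygons_realisable_def
  proof (intro allI impI)
    fix V' E' assume "subgraph V' E' V E ends \<and> polygonal V' E' ends"
    then have "E' \<subseteq> E" by (simp add: subgraph_def)
    then have "placement ends E' l p" by (rule placement_mono[OF p])
    then show "realisable V' E' ends l" by (auto simp: realisable_iff_placement)
  qed
next
  assume "polygons_realisable ends V E l"
  then obtain m M where "terminal_range ends V E l s t m M"
    using terminal_range_exists[OF st nonneg] by auto
  then have "m \<le> M" "\<forall>d. m \<le> d \<and> d \<le> M \<longrightarrow> distance_realisable ends E l s t d"
    unfolding terminal_range_def by auto
  then obtain p where "placement ends E l p" unfolding distance_realisable_def by auto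
  then show "realisable V E ends l" by (auto simp: realisable_iff_placement)
qed

theorem mainTheorem5:
  fixes V :: "'v set" and E :: "'e set" and ends :: "'e \<Rightarrow> 'v set" and l :: "'e \<Rightarrow> real"
  assumes "graph V E ends"
    and "\<forall>e\<in>E. l e \<ge> 0"
    and "series_parallel V E ends"
  shows "realisable V E ends l \<longleftrightarrow>
    (\<forall>V' E'. subgraph V' E' V E ends \<and> polygonal V' E' ends \<longrightarrow> realisable V' E' ends l)"
proof -
  obtain s t where "ttspg ends V E s t" using assms(3) unfolding series_parallel_def by blast
  from realisable_iff_polygons_realisable[OF this assms(2)] show ?thesis
    by (simp only: polygons_realisable_def)
qed

end
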